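(* Let $G$ be a group acting faithfully by homeomorphisms on an infinite Hausdorff space $\mathcal{X}$. Suppose that $U$ is an open subset of $\mathcal{X}$ such that its $R_U$-orbit is equal to its $G$-orbit and is a basis of the topology of $\mathcal{X}$. Then $R_U$ is simple and is contained in every non-trivial normal subgroup of $G$.
   Context: For an open $U\subset\mathcal{X}$, $G_{(U)}$ denotes the subgroup of elements of $G$ acting trivially on $\mathcal{X}\setminus U$, and $R_U$ denotes the normal closure in $G$ of the derived subgroup $G_{(U)}'=[G_{(U)},G_{(U)}]$. The $H$-orbit of $U$ for a subgroup $H$ is $\{hU: h\in H\}$. *)

theory Defs
  imports "HOL-Analysis.Analysis" "HOL-Algebra.Group_Action" "HOL-Algebra.Solvable_Groups"
begin

definition rigid_stab :: "('g, 'm) monoid_scheme \<Rightarrow> 'a topology \<Rightarrow> ('g \<Rightarrow> 'a \<Rightarrow> 'a) \<Rightarrow> 'a set \<Rightarrow> 'g set" where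
  "rigid_stab G X \<phi> U = {g \<in> carrier G. \<forall>x \<in> topspace X - U. \<phi> g x = x}"

definition normal_closure :: "('g, 'm) monoid_scheme \<Rightarrow> 'g set \<Rightarrow> 'g set" where
  "normal_closure G S = generate G (\<Union>g \<in> carrier G. (\<lambda>s. g \<otimes>\<^bsub>G\<^esub> s \<otimes>\<^bsub>G\<^esub> inv\<^bsub>G\<^esub> g) ` S)"

definition R_sub :: "('g, 'm) monoid_scheme \<Rightarrow> 'a topology \<Rightarrow> ('g \<Rightarrow> 'a \<Rightarrow> 'a) \<Rightarrow> 'a set \<Rightarrow> 'g set" where
  "R_sub G X \<phi> U = normal_closure G (derived G (rigid_stab G X \<phi> U))"

definition set_orbit :: "('g \<Rightarrow> 'a \<Rightarrow> 'a) \<Rightarrow> 'g set \<Rightarrow> 'a set \<Rightarrow> 'a set set" where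
  "set_orbit \<phi> H U = {\<phi> h ` U | h. h \<in> H}"

text \<open>Simple group (possibly infinite): non-trivial, only trivial normal subgroups.
  (The library's simple_group requires order > 1, i.e. finiteness.)\<close>
definition simple_grp :: "('g, 'm) monoid_scheme \<Rightarrow> bool" where
  "simple_grp H \<longleftrightarrow> group H \<and> carrier H \<noteq> {\<one>\<^bsub>H\<^esub>} \<and>
     (\<forall>N. N \<lhd> H \<longrightarrow> N = {\<one>\<^bsub>H\<^esub>} \<or> N = carrier H)"

end

theory Submission
  imports Defs
begin

(*
  A nontrivial g moves some point y; by continuity and the Hausdorff property a neighbourhood W
  of y is disjoint from g W, and by the basis property some translate V = k U lies in W.
  For a, b supported in V, the element c = g b^-1 g^-1 is supported in g W and so commutes
  with a, whence [a, b] = [a, b c] with b c = (b g b^-1) g^-1.  Hence [G_(V), G_(V)] lies in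
  every normal subgroup containing g, and so does its normal closure, which is R_U because V
  is a translate of U.

  For a nontrivial N normal in R_U the same argument, run inside R_U, puts the commutators of
  [G_(V), G_(V)] into N.  The orbit hypothesis lets conjugation by R_U replace conjugation by G,
  so N contains the normal closure in G of the commutators of [G_(U), G_(U)]; this is a
  nontrivial normal subgroup of G, hence it contains R_U.
*)

context group
begin

lemma inv_mult_cancel_left [simp]: "x \<in> carrier G \<Longrightarrow> y \<in> carrier G \<Longrightarrow> inv x \<otimes> (x \<otimes> y) = y"
  by (simp add: m_assoc[symmetric])

lemma mult_inv_cancel_left [simp]: "x \<in> carrier G \<Longrightarrow> y \<in> carrier G \<Longrightarrow> x \<otimes> (inv x \<otimes> y) = y"
  by (simp add: m_assoc[symmetric])

definition conj_by :: "'a \<Rightarrow> 'a \<Rightarrow> 'a" where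
  "conj_by k x = k \<otimes> x \<otimes> inv k"

lemma conj_by_closed [simp]: "k \<in> carrier G \<Longrightarrow> x \<in> carrier G \<Longrightarrow> conj_by k x \<in> carrier G"
  by (simp add: conj_by_def)

lemma group_hom_conj_by: "k \<in> carrier G \<Longrightarrow> group_hom G G (conj_by k)"
  by (intro group_hom.intro group_hom_axioms.intro homI is_group) (simp_all add: conj_by_def m_assoc)

lemma conj_by_mult:
  "k \<in> carrier G \<Longrightarrow> l \<in> carrier G \<Longrightarrow> x \<in> carrier G \<Longrightarrow> conj_by (k \<otimes> l) x = conj_by k (conj_by l x)"
  by (simp add: conj_by_def m_assoc inv_mult_group)

lemma conj_by_inv_conj_by [simp]:
  "k \<in> carrier G \<Longrightarrow> x \<in> carrier G \<Longrightarrow> conj_by (inv k) (conj_by k x) = x"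
  by (simp add: conj_by_def m_assoc)

lemma conj_by_conj_by_inv [simp]:
  "k \<in> carrier G \<Longrightarrow> x \<in> carrier G \<Longrightarrow> conj_by k (conj_by (inv k) x) = x"
  by (simp add: conj_by_def m_assoc)

lemma conj_by_commutator:
  assumes "k \<in> carrier G" "a \<in> carrier G" "b \<in> carrier G"
  shows "conj_by k (a \<otimes> b \<otimes> inv a \<otimes> inv b) =
    conj_by k a \<otimes> conj_by k b \<otimes> inv (conj_by k a) \<otimes> inv (conj_by k b)"
proof -
  interpret group_hom G G "conj_by k" by (rule group_hom_conj_by[OF assms(1)])
  show ?thesis using assms by (simp add: hom_inv)
qed

lemma conj_by_derived_set:
  assumes "k \<in> carrier G" "S \<subseteq> carrier G"
  shows "conj_by k ` derived_set G S = derived_set G (conj_by k ` S)"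
proof -
  have "conj_by k (a \<otimes> b \<otimes> inv a \<otimes> inv b) \<in> derived_set G (conj_by k ` S)"
    if "a \<in> S" "b \<in> S" for a b
    using that assms by (auto simp: conj_by_commutator subset_iff)
  moreover have "conj_by k a \<otimes> conj_by k b \<otimes> inv (conj_by k a) \<otimes> inv (conj_by k b)
      \<in> conj_by k ` derived_set G S" if "a \<in> S" "b \<in> S" for a b
    using that assms by (auto simp: conj_by_commutator[symmetric] subset_iff)
  ultimately show ?thesis by blast
qed

lemma conj_by_derived:
  assumes "k \<in> carrier G" "S \<subseteq> carrier G"
  shows "conj_by k ` derived G S = derived G (conj_by k ` S)"
  using group_hom.derived_img[OF group_hom_conj_by[OF assms(1)] assms(2)] by simp

lemma normal_closure_eq_generate:
  "normal_closure G S = generate G (\<Union>k\<in>carrier G. conj_by k ` S)"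
  by (simp add: normal_closure_def conj_by_def)

lemma conj_by_in_normal_closure:
  assumes "S \<subseteq> carrier G" "k \<in> carrier G" "s \<in> S"
  shows "conj_by k s \<in> normal_closure G S"
  unfolding normal_closure_eq_generate using assms by (auto intro: generate.incl)

lemma subset_normal_closure: "S \<subseteq> carrier G \<Longrightarrow> S \<subseteq> normal_closure G S"
  using conj_by_in_normal_closure[of S \<one>] by (force simp: conj_by_def)

lemma normal_closure_normal:
  assumes "S \<subseteq> carrier G"
  shows "normal_closure G S \<lhd> G"
  unfolding normal_closure_eq_generate
proof (rule normal_generateI)
  show "(\<Union>k\<in>carrier G. conj_by k ` S) \<subseteq> carrier G" using assms by auto
next
  fix h g assume "h \<in> (\<Union>k\<in>carrier G. conj_by k ` S)" and g: "g \<in> carrier G"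
  then obtain k s where "k \<in> carrier G" "s \<in> S" "h = conj_by k s" by blast
  moreover from this have "g \<otimes> h \<otimes> inv g = conj_by (g \<otimes> k) s"
    using assms g by (simp add: conj_by_mult conj_by_def[of g] subset_iff)
  ultimately show "g \<otimes> h \<otimes> inv g \<in> (\<Union>k\<in>carrier G. conj_by k ` S)" using g by blast
qed

lemma normal_closure_minimal:
  assumes "subgroup N G" and "\<And>k s. k \<in> carrier G \<Longrightarrow> s \<in> S \<Longrightarrow> conj_by k s \<in> N"
  shows "normal_closure G S \<subseteq> N"
  unfolding normal_closure_eq_generate by (rule generate_subgroup_incl) (use assms in auto)

lemma normal_closure_subset_normal:
  assumes "N \<lhd> G" and "S \<subseteq> N"
  shows "normal_closure G S \<subseteq> N"
  using assms normal_imp_subgroup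
  by (intro normal_closure_minimal) (auto simp: conj_by_def normal.inv_op_closed2)

lemma normal_closure_conj_by:
  assumes "S \<subseteq> carrier G" "k \<in> carrier G"
  shows "normal_closure G (conj_by k ` S) = normal_closure G S"
proof
  show "normal_closure G (conj_by k ` S) \<subseteq> normal_closure G S"
    using assms conj_by_in_normal_closure normal_closure_normal
    by (intro normal_closure_subset_normal) auto
  have "S \<subseteq> conj_by (inv k) ` conj_by k ` S"
    using assms by (force simp: image_iff)
  also have "\<dots> \<subseteq> normal_closure G (conj_by k ` S)"
    using assms by (intro image_subsetI conj_by_in_normal_closure) auto
  finally show "normal_closure G S \<subseteq> normal_closure G (conj_by k ` S)"
    using assms by (intro normal_closure_subset_normal normal_closure_normal) auto
qed

lemma commutator_in_normalised_subgroup: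
  assumes N: "subgroup N G" and g: "g \<in> N" and ab: "a \<in> carrier G" "b \<in> carrier G"
    and normalises: "\<And>x n. x \<in> {a, b} \<Longrightarrow> n \<in> N \<Longrightarrow> x \<otimes> n \<otimes> inv x \<in> N"
    and commutes: "a \<otimes> conj_by g (inv b) = conj_by g (inv b) \<otimes> a"
  shows "a \<otimes> b \<otimes> inv a \<otimes> inv b \<in> N"
proof -
  define c where "c = conj_by g (inv b)"
  have gc: "g \<in> carrier G" using g subgroup.subset[OF N] by blast
  have c: "c \<in> carrier G" using gc ab by (simp add: c_def)
  have "c \<otimes> inv a = inv a \<otimes> (a \<otimes> c) \<otimes> inv a"
    using ab c by (simp add: m_assoc)
  also have "\<dots> = inv a \<otimes> c"
    using commutes ab c by (simp add: c_def[symmetric] m_assoc)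
  finally have ca: "c \<otimes> inv a = inv a \<otimes> c" .
  have "b \<otimes> c = (b \<otimes> g \<otimes> inv b) \<otimes> inv g"
    using gc ab by (simp add: c_def conj_by_def m_assoc)
  then have bc: "b \<otimes> c \<in> N"
    using normalises g N by (simp add: subgroup.m_closed subgroup.m_inv_closed)
  have "a \<otimes> b \<otimes> inv a \<otimes> inv b = a \<otimes> b \<otimes> (inv a \<otimes> c) \<otimes> inv c \<otimes> inv b"
    using ab c by (simp add: m_assoc)
  also have "\<dots> = (a \<otimes> (b \<otimes> c) \<otimes> inv a) \<otimes> inv (b \<otimes> c)"
    using ab c by (simp add: ca[symmetric] m_assoc inv_mult_group)
  also have "\<dots> \<in> N"
    using normalises bc N by (simp add: subgroup.m_closed subgroup.m_inv_closed)
  finally show ?thesis .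
qed

end

definition support :: "'b set \<Rightarrow> ('a \<Rightarrow> 'b \<Rightarrow> 'b) \<Rightarrow> 'a \<Rightarrow> 'b set" where
  "support E \<phi> g = {x \<in> E. \<phi> g x \<noteq> x}"

sublocale group_action \<subseteq> group
  by (rule group_hom.axioms(1)[OF group_hom])

context group_action
begin

lemma action_one: "x \<in> E \<Longrightarrow> \<phi> \<one> x = x"
  by (metis id_eq_one restrict_apply')

lemma action_inv_cancel [simp]: "g \<in> carrier G \<Longrightarrow> x \<in> E \<Longrightarrow> \<phi> (inv g) (\<phi> g x) = x"
  by (metis composition_rule inv_closed l_inv action_one)

lemma action_cancel_inv [simp]: "g \<in> carrier G \<Longrightarrow> x \<in> E \<Longrightarrow> \<phi> g (\<phi> (inv g) x) = x"
  by (metis composition_rule inv_closed r_inv action_one)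

lemma action_closed: "g \<in> carrier G \<Longrightarrow> x \<in> E \<Longrightarrow> \<phi> g x \<in> E"
  using element_image by blast

lemma image_action_inv_image: "g \<in> carrier G \<Longrightarrow> V \<subseteq> E \<Longrightarrow> \<phi> (inv g) ` \<phi> g ` V = V"
  by (force simp: image_image subset_iff)

lemma support_subset: "support E \<phi> g \<subseteq> E"
  by (auto simp: support_def)

lemma support_one [simp]: "support E \<phi> \<one> = {}"
  by (simp add: support_def action_one)

lemma action_in_support: "g \<in> carrier G \<Longrightarrow> x \<in> support E \<phi> g \<Longrightarrow> \<phi> g x \<in> support E \<phi> g"
  unfolding support_def using action_closed inj_prop by (auto dest: inj_onD)

lemma support_inv: "g \<in> carrier G \<Longrightarrow> support E \<phi> (inv g) = support E \<phi> g"
  unfolding support_def by (metis action_inv_cancel action_cancel_inv)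

lemma support_mult:
  "g \<in> carrier G \<Longrightarrow> h \<in> carrier G \<Longrightarrow> support E \<phi> (g \<otimes> h) \<subseteq> support E \<phi> g \<union> support E \<phi> h"
  unfolding support_def using composition_rule by auto

lemma support_conj_by:
  assumes k: "k \<in> carrier G" and a: "a \<in> carrier G"
  shows "support E \<phi> (conj_by k a) = \<phi> k ` support E \<phi> a"
proof -
  have "\<phi> (conj_by k a) (\<phi> k x) = \<phi> k (\<phi> a x)" if "x \<in> E" for x
    using that assms by (simp add: conj_by_def composition_rule action_closed)
  then have moved: "\<phi> (conj_by k a) (\<phi> k x) \<noteq> \<phi> k x \<longleftrightarrow> \<phi> a x \<noteq> x" if "x \<in> E" for x
    using that assms inj_prop[OF k] action_closed by (auto dest: inj_onD)
  show ?thesis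
  proof (intro subset_antisym subsetI)
    fix y assume y: "y \<in> support E \<phi> (conj_by k a)"
    then have "y \<in> E" by (simp add: support_def)
    then have "\<phi> (inv k) y \<in> E" "y = \<phi> k (\<phi> (inv k) y)" using k by (simp_all add: action_closed)
    with y moved show "y \<in> \<phi> k ` support E \<phi> a"
      unfolding support_def by (metis (mono_tags, lifting) image_eqI mem_Collect_eq)
  next
    fix y assume "y \<in> \<phi> k ` support E \<phi> a"
    with moved k show "y \<in> support E \<phi> (conj_by k a)"
      by (auto simp: support_def action_closed)
  qed
qed

end

context faithful_action
begin

lemma eq_if_action_eq:
  assumes "g \<in> carrier G" "h \<in> carrier G" "\<And>x. x \<in> E \<Longrightarrow> \<phi> g x = \<phi> h x"
  shows "g = h"
proof -
  have "\<phi> g \<in> extensional E" "\<phi> h \<in> extensional E"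
    using bij_prop0 assms(1,2) by (auto simp: Bij_def)
  then have "\<phi> g = \<phi> h" using assms(3) by (rule extensionalityI)
  then show ?thesis using faithful assms(1,2) by (auto dest: inj_onD)
qed

lemma support_eq_empty_iff: "g \<in> carrier G \<Longrightarrow> support E \<phi> g = {} \<longleftrightarrow> g = \<one>"
  by (auto simp: support_def action_one intro: eq_if_action_eq)

lemma commute_if_disjoint_support:
  assumes a: "a \<in> carrier G" and b: "b \<in> carrier G" and disj: "support E \<phi> a \<inter> support E \<phi> b = {}"
  shows "a \<otimes> b = b \<otimes> a"
proof (rule eq_if_action_eq)
  fix x assume x: "x \<in> E"
  have "\<phi> a (\<phi> b x) = \<phi> b (\<phi> a x)"
  proof (cases "x \<in> support E \<phi> a")
    case True
    then have "\<phi> a x \<in> support E \<phi> a" using action_in_support[OF a] by blast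
    then have "\<phi> b (\<phi> a x) = \<phi> a x" "\<phi> b x = x" using True disj x by (auto simp: support_def)
    then show ?thesis by simp
  next
    case False
    then have ax: "\<phi> a x = x" using x by (auto simp: support_def)
    show ?thesis
    proof (cases "x \<in> support E \<phi> b")
      case True
      then have "\<phi> b x \<in> support E \<phi> b" using action_in_support[OF b] by blast
      then have "\<phi> a (\<phi> b x) = \<phi> b x" using disj by (auto simp: support_def)
      then show ?thesis using ax by simp
    next
      case False
      then show ?thesis using x ax by (auto simp: support_def)
    qed
  qed
  then show "\<phi> (a \<otimes> b) x = \<phi> (b \<otimes> a) x" using a b x by (simp add: composition_rule)
qed (use a b in auto)

text \<open>The commutator acts as \<open>a\<close> on \<open>W\<close>, because \<open>e a\<inverse> e\<inverse>\<close> is supported in \<open>e W\<close>.\<close>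
lemma commutator_ne_one_if_support_displaced:
  assumes a: "a \<in> carrier G" "a \<noteq> \<one>" and e: "e \<in> carrier G"
    and W: "support E \<phi> a \<subseteq> W" "W \<inter> \<phi> e ` W = {}"
  shows "a \<otimes> e \<otimes> inv a \<otimes> inv e \<noteq> \<one>"
proof
  assume one: "a \<otimes> e \<otimes> inv a \<otimes> inv e = \<one>"
  obtain z where z: "z \<in> support E \<phi> a" using a support_eq_empty_iff by blast
  have "support E \<phi> (conj_by e (inv a)) \<subseteq> \<phi> e ` W"
    using W a e by (simp add: support_conj_by support_inv image_mono)
  then have "\<phi> (conj_by e (inv a)) z = z" using z W by (auto simp: support_def)
  moreover have "a \<otimes> e \<otimes> inv a \<otimes> inv e = a \<otimes> conj_by e (inv a)"
    using a e by (simp add: conj_by_def m_assoc)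
  ultimately have "\<phi> \<one> z = \<phi> a z"
    using one a e z support_subset by (metis composition_rule conj_by_closed inv_closed subsetD)
  then show False using z by (simp add: support_def action_one)
qed

end

lemma Hausdorff_space_disjoint_image_nbhd:
  assumes "Hausdorff_space X" "continuous_map X X f" "y \<in> topspace X" "f y \<noteq> y"
  obtains W where "openin X W" "y \<in> W" "W \<inter> f ` W = {}"
proof -
  have "f y \<in> topspace X" using assms(2,3) continuous_map_image_subset_topspace by blast
  then obtain A B where AB: "openin X A" "openin X B" "y \<in> A" "f y \<in> B" "disjnt A B"
    using assms(1,3,4) unfolding Hausdorff_space_def by metis
  let ?W = "A \<inter> {x \<in> topspace X. f x \<in> B}"
  have "openin X ?W" using AB(1,2) openin_continuous_map_preimage[OF assms(2)] by blast
  moreover have "?W \<inter> f ` ?W = {}" using AB(5) by (auto simp: disjnt_def)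
  ultimately show thesis using that AB(3,4) assms(3) by blast
qed

locale homeomorphism_action = faithful_action G "topspace X" \<phi>
  for G (structure) and X :: "'a topology" and \<phi> +
  assumes homeomorphic: "\<And>g. g \<in> carrier G \<Longrightarrow> homeomorphic_map X X (\<phi> g)"
begin

abbreviation rigid_derived where
  "rigid_derived V \<equiv> derived G (rigid_stab G X \<phi> V)"

lemma rigid_stab_iff: "g \<in> rigid_stab G X \<phi> V \<longleftrightarrow> g \<in> carrier G \<and> support (topspace X) \<phi> g \<subseteq> V"
  by (auto simp: rigid_stab_def support_def)

lemma subgroup_rigid_stab: "subgroup (rigid_stab G X \<phi> V) G"
proof (rule subgroup.intro)
  show "rigid_stab G X \<phi> V \<subseteq> carrier G" by (auto simp: rigid_stab_iff)
  show "x \<otimes> y \<in> rigid_stab G X \<phi> V" if "x \<in> rigid_stab G X \<phi> V" "y \<in> rigid_stab G X \<phi> V" for x y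
    using that support_mult by (fastforce simp: rigid_stab_iff)
  show "\<one> \<in> rigid_stab G X \<phi> V" by (simp add: rigid_stab_iff)
  show "inv x \<in> rigid_stab G X \<phi> V" if "x \<in> rigid_stab G X \<phi> V" for x
    using that by (simp add: rigid_stab_iff support_inv)
qed

lemma rigid_stab_mono: "V \<subseteq> V' \<Longrightarrow> rigid_stab G X \<phi> V \<subseteq> rigid_stab G X \<phi> V'"
  by (meson order_trans rigid_stab_iff subsetI)

lemma rigid_derived_subset_rigid_stab: "rigid_derived V \<subseteq> rigid_stab G X \<phi> V"
  by (rule derived_incl[OF subset_refl subgroup_rigid_stab])

lemma rigid_derived_subset_carrier: "rigid_derived V \<subseteq> carrier G"
  using rigid_derived_subset_rigid_stab subgroup.subset[OF subgroup_rigid_stab] by blast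

lemma conj_by_rigid_stab_subset:
  "k \<in> carrier G \<Longrightarrow> conj_by k ` rigid_stab G X \<phi> V \<subseteq> rigid_stab G X \<phi> (\<phi> k ` V)"
  by (auto simp: rigid_stab_iff support_conj_by image_mono)

lemma conj_by_rigid_stab:
  assumes k: "k \<in> carrier G" and V: "V \<subseteq> topspace X"
  shows "conj_by k ` rigid_stab G X \<phi> V = rigid_stab G X \<phi> (\<phi> k ` V)"
proof
  show "rigid_stab G X \<phi> (\<phi> k ` V) \<subseteq> conj_by k ` rigid_stab G X \<phi> V"
  proof
    fix g assume g: "g \<in> rigid_stab G X \<phi> (\<phi> k ` V)"
    then have "conj_by (inv k) g \<in> rigid_stab G X \<phi> (\<phi> (inv k) ` \<phi> k ` V)"
      using conj_by_rigid_stab_subset[of "inv k" "\<phi> k ` V"] k by blast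
    then have "conj_by (inv k) g \<in> rigid_stab G X \<phi> V"
      by (simp only: image_action_inv_image[OF k V])
    moreover have "g = conj_by k (conj_by (inv k) g)"
      using g k by (simp add: rigid_stab_iff)
    ultimately show "g \<in> conj_by k ` rigid_stab G X \<phi> V"
      by (rule rev_image_eqI)
  qed
qed (rule conj_by_rigid_stab_subset[OF k])

lemma rigid_derived_translate:
  assumes "k \<in> carrier G" "V \<subseteq> topspace X"
  shows "rigid_derived (\<phi> k ` V) = conj_by k ` rigid_derived V"
  using conj_by_derived[OF assms(1) subgroup.subset[OF subgroup_rigid_stab]]
  by (simp only: conj_by_rigid_stab[OF assms])

lemma R_sub_translate:
  assumes "k \<in> carrier G" "V \<subseteq> topspace X"
  shows "R_sub G X \<phi> (\<phi> k ` V) = R_sub G X \<phi> V"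
  unfolding R_sub_def rigid_derived_translate[OF assms]
  by (rule normal_closure_conj_by[OF rigid_derived_subset_carrier assms(1)])

lemma rigid_derived_subset_R_sub: "rigid_derived V \<subseteq> R_sub G X \<phi> V"
  unfolding R_sub_def by (rule subset_normal_closure[OF rigid_derived_subset_carrier])

end

locale translate_basis_action = homeomorphism_action +
  fixes U
  assumes Hausdorff: "Hausdorff_space X"
    and openin_U: "openin X U"
    and translates_basis: "openin X = arbitrary union_of (\<lambda>V. V \<in> set_orbit \<phi> (carrier G) U)"
begin

abbreviation R where "R \<equiv> R_sub G X \<phi> U"

lemma U_subset: "U \<subseteq> topspace X"
  by (rule openin_subset[OF openin_U])

lemma translate_in_nbhd:
  assumes "openin X W" "x \<in> W"
  obtains k where "k \<in> carrier G" "x \<in> \<phi> k ` U" "\<phi> k ` U \<subseteq> W"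
proof -
  obtain \<F> where \<F>: "\<F> \<subseteq> set_orbit \<phi> (carrier G) U" "\<Union>\<F> = W"
    using assms(1) translates_basis by (auto simp: union_of_def arbitrary_def)
  then obtain V where "V \<in> \<F>" "x \<in> V" using assms(2) by blast
  with \<F> show thesis using that by (auto simp: set_orbit_def)
qed

lemma R_normal: "R \<lhd> G"
  unfolding R_sub_def by (rule normal_closure_normal[OF rigid_derived_subset_carrier])

lemma rigid_derived_translate_subset_R: "k \<in> carrier G \<Longrightarrow> rigid_derived (\<phi> k ` U) \<subseteq> R"
  using rigid_derived_subset_R_sub R_sub_translate[OF _ U_subset] by blast

lemma translate_commutators_in_subgroup:
  assumes N: "subgroup N G" and g: "g \<in> N" "g \<noteq> \<one>"
  obtains k where "k \<in> carrier G"
    and "\<And>a b. a \<in> rigid_stab G X \<phi> (\<phi> k ` U) \<Longrightarrow> b \<in> rigid_stab G X \<phi> (\<phi> k ` U) \<Longrightarrow>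
      (\<And>x n. x \<in> {a, b} \<Longrightarrow> n \<in> N \<Longrightarrow> x \<otimes> n \<otimes> inv x \<in> N) \<Longrightarrow>
      a \<otimes> b \<otimes> inv a \<otimes> inv b \<in> N"
proof -
  have gc: "g \<in> carrier G" using g subgroup.subset[OF N] by blast
  then obtain y where y: "y \<in> support (topspace X) \<phi> g" using g support_eq_empty_iff by blast
  have "continuous_map X X (\<phi> g)" using homeomorphic[OF gc] homeomorphic_imp_continuous_map by blast
  then obtain W where W: "openin X W" "y \<in> W" "W \<inter> \<phi> g ` W = {}"
    using Hausdorff_space_disjoint_image_nbhd[OF Hausdorff] y by (auto simp: support_def)
  obtain k where k: "k \<in> carrier G" "\<phi> k ` U \<subseteq> W" using translate_in_nbhd[OF W(1,2)] by blast
  have "a \<otimes> b \<otimes> inv a \<otimes> inv b \<in> N"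
    if ab: "a \<in> rigid_stab G X \<phi> (\<phi> k ` U)" "b \<in> rigid_stab G X \<phi> (\<phi> k ` U)"
      and normalises: "\<And>x n. x \<in> {a, b} \<Longrightarrow> n \<in> N \<Longrightarrow> x \<otimes> n \<otimes> inv x \<in> N" for a b
  proof -
    have abc: "a \<in> carrier G" "b \<in> carrier G" and supp: "support (topspace X) \<phi> a \<subseteq> W"
        "support (topspace X) \<phi> b \<subseteq> W"
      using ab k by (auto simp: rigid_stab_iff)
    have "support (topspace X) \<phi> (conj_by g (inv b)) \<subseteq> \<phi> g ` W"
      using gc abc supp by (simp add: support_conj_by support_inv image_mono)
    then have "a \<otimes> conj_by g (inv b) = conj_by g (inv b) \<otimes> a"
      using supp W(3) gc abc by (intro commute_if_disjoint_support) auto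
    then show ?thesis
      using commutator_in_normalised_subgroup[OF N g(1) abc normalises] by blast
  qed
  then show thesis using that k(1) by blast
qed

lemma R_subset_normal:
  assumes N: "N \<lhd> G" and nontrivial: "N \<noteq> {\<one>}"
  shows "R \<subseteq> N"
proof -
  have Ns: "subgroup N G" using N normal_imp_subgroup by blast
  then obtain g where g: "g \<in> N" "g \<noteq> \<one>" using nontrivial subgroup.one_closed by blast
  obtain k where k: "k \<in> carrier G" and comm: "\<And>a b. a \<in> rigid_stab G X \<phi> (\<phi> k ` U) \<Longrightarrow>
      b \<in> rigid_stab G X \<phi> (\<phi> k ` U) \<Longrightarrow>
      (\<And>x n. x \<in> {a, b} \<Longrightarrow> n \<in> N \<Longrightarrow> x \<otimes> n \<otimes> inv x \<in> N) \<Longrightarrow>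
      a \<otimes> b \<otimes> inv a \<otimes> inv b \<in> N"
    using translate_commutators_in_subgroup[OF Ns g] by blast
  have "a \<otimes> b \<otimes> inv a \<otimes> inv b \<in> N"
    if "a \<in> rigid_stab G X \<phi> (\<phi> k ` U)" "b \<in> rigid_stab G X \<phi> (\<phi> k ` U)" for a b
    using that by (intro comm) (auto simp: rigid_stab_iff intro: normal.inv_op_closed2[OF N])
  then have "derived_set G (rigid_stab G X \<phi> (\<phi> k ` U)) \<subseteq> N" by blast
  then have "rigid_derived (\<phi> k ` U) \<subseteq> N"
    unfolding derived_def by (rule generate_subgroup_incl[OF _ Ns])
  then have "R_sub G X \<phi> (\<phi> k ` U) \<subseteq> N"
    unfolding R_sub_def by (rule normal_closure_subset_normal[OF N])
  then show ?thesis using R_sub_translate[OF k U_subset] by simp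
qed

end

locale R_translate_basis_action = translate_basis_action +
  assumes infinite_space: "infinite (topspace X)"
    and R_orbit_eq: "set_orbit \<phi> (R_sub G X \<phi> U) U = set_orbit \<phi> (carrier G) U"
begin

lemma R_subgroup: "subgroup R G"
  by (rule normal_imp_subgroup[OF R_normal])

lemma translate_by_R:
  assumes "k \<in> carrier G"
  obtains r where "r \<in> R" "\<phi> r ` U = \<phi> k ` U"
proof -
  have "\<phi> k ` U \<in> set_orbit \<phi> R U" using R_orbit_eq assms by (auto simp: set_orbit_def)
  then show thesis using that by (auto simp: set_orbit_def)
qed

text \<open>A space with two points and a basis consisting of a single set \<open>U\<close> is not Hausdorff.\<close>
lemma translate_ne: "\<exists>h\<in>carrier G. \<phi> h ` U \<noteq> U"
proof (rule ccontr)
  assume "\<not> ?thesis"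
  then have "set_orbit \<phi> (carrier G) U = {U}" by (auto simp: set_orbit_def)
  then have opens: "A = {} \<or> A = U" if "openin X A" for A
    using that translates_basis by (auto simp: union_of_def arbitrary_def subset_singleton_iff)
  obtain x where x: "x \<in> topspace X" using infinite_space infinite_imp_nonempty by blast
  have "infinite (topspace X - {x})" using infinite_space by simp
  then obtain y where y: "y \<in> topspace X" "x \<noteq> y" using infinite_imp_nonempty by blast
  obtain A B where "openin X A" "openin X B" "x \<in> A" "y \<in> B" "disjnt A B"
    using Hausdorff x y unfolding Hausdorff_space_def by metis
  then show False using opens by (auto simp: disjnt_def)
qed

lemma R_nontrivial: "R \<noteq> {\<one>}"
proof
  assume R: "R = {\<one>}"
  obtain h where h: "h \<in> carrier G" "\<phi> h ` U \<noteq> U" using translate_ne by blast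
  obtain r where "r \<in> R" "\<phi> r ` U = \<phi> h ` U" by (rule translate_by_R[OF h(1)])
  then have "\<phi> h ` U = \<phi> \<one> ` U" using R by simp
  also have "\<dots> = U" using U_subset action_one by (simp add: subset_iff)
  finally show False using h by simp
qed

lemma rigid_derived_nontrivial: "\<exists>e\<in>rigid_derived U. e \<noteq> \<one>"
proof (rule ccontr)
  assume "\<not> ?thesis"
  then have "R \<subseteq> {\<one>}"
    unfolding R_sub_def by (intro normal_closure_minimal[OF triv_subgroup]) (auto simp: conj_by_def)
  then show False using R_nontrivial subgroup.one_closed[OF R_subgroup] by blast
qed

text \<open>Conjugating a nontrivial \<open>e \<in> [G\<^sub>(\<^sub>U\<^sub>), G\<^sub>(\<^sub>U\<^sub>)]\<close> into a translate \<open>k U \<subseteq> U\<close> that is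
  displaced by \<open>e\<close> yields an element not commuting with \<open>e\<close>.\<close>
lemma rigid_derived_commutators_nontrivial: "\<exists>w\<in>derived_set G (rigid_derived U). w \<noteq> \<one>"
proof -
  obtain e where e: "e \<in> rigid_derived U" "e \<noteq> \<one>" using rigid_derived_nontrivial by blast
  have ec: "e \<in> carrier G" using e rigid_derived_subset_carrier by blast
  then obtain y where y: "y \<in> support (topspace X) \<phi> e" using e support_eq_empty_iff by blast
  have "support (topspace X) \<phi> e \<subseteq> U"
    using e(1) rigid_derived_subset_rigid_stab[of U] rigid_stab_iff by blast
  then have yU: "y \<in> U" using y by blast
  have "continuous_map X X (\<phi> e)" using homeomorphic[OF ec] homeomorphic_imp_continuous_map by blast
  then obtain W where W: "openin X W" "y \<in> W" "W \<inter> \<phi> e ` W = {}"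
    using Hausdorff_space_disjoint_image_nbhd[OF Hausdorff] y by (auto simp: support_def)
  obtain k where k: "k \<in> carrier G" "\<phi> k ` U \<subseteq> W \<inter> U"
    using translate_in_nbhd[of "W \<inter> U" y] W openin_U yU by blast
  define a where "a = conj_by k e"
  have "a \<in> rigid_derived (\<phi> k ` U)"
    using rigid_derived_translate[OF k(1) U_subset] e by (simp add: a_def)
  moreover have "rigid_derived (\<phi> k ` U) \<subseteq> rigid_derived U"
    using k by (intro mono_derived rigid_stab_mono) auto
  ultimately have aU: "a \<in> rigid_derived U" by blast
  have "support (topspace X) \<phi> a \<subseteq> \<phi> k ` U"
    using \<open>a \<in> rigid_derived (\<phi> k ` U)\<close> rigid_derived_subset_rigid_stab rigid_stab_iff by blast
  then have "support (topspace X) \<phi> a \<subseteq> W" using k(2) by blast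
  moreover have "a \<in> carrier G" using k ec by (simp add: a_def)
  moreover have "a \<noteq> \<one>"
  proof
    assume "a = \<one>"
    then have "e = conj_by (inv k) \<one>" using k ec by (metis a_def conj_by_inv_conj_by)
    then show False using e(2) k by (simp add: conj_by_def)
  qed
  ultimately have "a \<otimes> e \<otimes> inv a \<otimes> inv e \<noteq> \<one>"
    using commutator_ne_one_if_support_displaced[OF _ _ ec _ W(3)] by blast
  then show ?thesis using aU e(1) by blast
qed

text \<open>Every element of \<open>G\<close> is an element of \<open>R\<^sub>U\<close> followed by an element stabilising \<open>U\<close>,
  and the latter normalise \<open>[G\<^sub>(\<^sub>U\<^sub>), G\<^sub>(\<^sub>U\<^sub>)]\<close>.\<close>
lemma conj_by_commutator_eq_conj_by_R:
  assumes g: "g \<in> carrier G" and z: "z \<in> derived_set G (rigid_derived U)"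
  obtains r z' where "r \<in> R" "z' \<in> derived_set G (rigid_derived U)" "conj_by g z = conj_by r z'"
proof -
  obtain r where r: "r \<in> R" "\<phi> r ` U = \<phi> g ` U" using translate_by_R[OF g] by blast
  have rc: "r \<in> carrier G" using r subgroup.subset[OF R_subgroup] by blast
  define s where "s = inv r \<otimes> g"
  have sc: "s \<in> carrier G" using rc g by (simp add: s_def)
  have "\<phi> s ` U = \<phi> (inv r) ` \<phi> g ` U"
    using U_subset rc g by (force simp: s_def composition_rule image_iff subset_iff)
  also have "\<dots> = U" using r image_action_inv_image[OF rc U_subset] by simp
  finally have sU: "\<phi> s ` U = U" .
  have fixed: "conj_by s ` rigid_derived U = rigid_derived U"
    using rigid_derived_translate[OF sc U_subset] unfolding sU by (rule sym)
  have "conj_by s z \<in> conj_by s ` derived_set G (rigid_derived U)" using z by (rule imageI)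
  then have "conj_by s z \<in> derived_set G (rigid_derived U)"
    unfolding conj_by_derived_set[OF sc rigid_derived_subset_carrier] fixed .
  moreover have "conj_by g z = conj_by r (conj_by s z)"
  proof -
    have "z \<in> carrier G" using z derived_set_in_carrier[OF rigid_derived_subset_carrier] by blast
    moreover have "g = r \<otimes> s" using rc g by (simp add: s_def)
    ultimately show ?thesis using rc sc by (simp add: conj_by_mult)
  qed
  ultimately show thesis using that r(1) by blast
qed

lemma normal_subgroup_of_R_eq:
  assumes N: "N \<lhd> G\<lparr>carrier := R\<rparr>" and nontrivial: "N \<noteq> {\<one>}"
  shows "N = R"
proof -
  have NR: "subgroup N (G\<lparr>carrier := R\<rparr>)" using N normal_imp_subgroup by blast
  have Ns: "subgroup N G" by (rule incl_subgroup[OF R_subgroup NR])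
  have N_R: "N \<subseteq> R" using subgroup.subset[OF NR] by simp
  have normalises: "h \<otimes> n \<otimes> inv h \<in> N" if "h \<in> R" "n \<in> N" for h n
  proof -
    have "h \<otimes> n \<otimes> inv\<^bsub>G\<lparr>carrier := R\<rparr>\<^esub> h \<in> N" using normal.inv_op_closed2[OF N] that by simp
    then show ?thesis using m_inv_consistent[OF R_subgroup that(1)] by simp
  qed
  obtain g where g: "g \<in> N" "g \<noteq> \<one>" using nontrivial subgroup.one_closed[OF Ns] by blast
  obtain k where k: "k \<in> carrier G" and comm: "\<And>a b. a \<in> rigid_stab G X \<phi> (\<phi> k ` U) \<Longrightarrow>
      b \<in> rigid_stab G X \<phi> (\<phi> k ` U) \<Longrightarrow>
      (\<And>x n. x \<in> {a, b} \<Longrightarrow> n \<in> N \<Longrightarrow> x \<otimes> n \<otimes> inv x \<in> N) \<Longrightarrow>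
      a \<otimes> b \<otimes> inv a \<otimes> inv b \<in> N"
    using translate_commutators_in_subgroup[OF Ns g] by blast
  obtain r where r: "r \<in> R" "\<phi> r ` U = \<phi> k ` U" using translate_by_R[OF k] .
  have rc: "r \<in> carrier G" using r subgroup.subset[OF R_subgroup] by blast
  have "a \<otimes> b \<otimes> inv a \<otimes> inv b \<in> N"
    if "a \<in> rigid_derived (\<phi> k ` U)" "b \<in> rigid_derived (\<phi> k ` U)" for a b
  proof -
    have "a \<in> R" "b \<in> R" using that rigid_derived_translate_subset_R[OF k] by auto
    moreover have "a \<in> rigid_stab G X \<phi> (\<phi> k ` U)" "b \<in> rigid_stab G X \<phi> (\<phi> k ` U)"
      using that rigid_derived_subset_rigid_stab by auto
    ultimately show ?thesis by (intro comm) (auto intro: normalises)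
  qed
  then have "derived_set G (rigid_derived (\<phi> k ` U)) \<subseteq> N" by blast
  moreover have "conj_by r ` derived_set G (rigid_derived U) = derived_set G (rigid_derived (\<phi> k ` U))"
    using conj_by_derived_set[OF rc rigid_derived_subset_carrier] rigid_derived_translate[OF rc U_subset] r(2)
    by simp
  ultimately have conj_by_r: "conj_by r z \<in> N" if "z \<in> derived_set G (rigid_derived U)" for z
    using that by blast
  have "conj_by g z \<in> N" if gz: "g \<in> carrier G" "z \<in> derived_set G (rigid_derived U)" for g z
  proof -
    obtain r' z' where r': "r' \<in> R" "z' \<in> derived_set G (rigid_derived U)" "conj_by g z = conj_by r' z'"
      using conj_by_commutator_eq_conj_by_R[OF gz] .
    have r'c: "r' \<in> carrier G" using r'(1) subgroup.subset[OF R_subgroup] by blast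
    have z'c: "z' \<in> carrier G" using r'(2) derived_set_in_carrier[OF rigid_derived_subset_carrier] by blast
    have "r' = r' \<otimes> inv r \<otimes> r" using r'c rc by (simp add: m_assoc)
    then have "conj_by r' z' = conj_by (r' \<otimes> inv r) (conj_by r z')"
      using r'c rc z'c by (metis conj_by_mult inv_closed m_closed)
    moreover have "r' \<otimes> inv r \<in> R"
      using r r' R_subgroup by (simp add: subgroup.m_closed subgroup.m_inv_closed)
    ultimately show ?thesis
      using normalises conj_by_r[OF r'(2)] r'(3) by (simp add: conj_by_def)
  qed
  then have "normal_closure G (derived_set G (rigid_derived U)) \<subseteq> N"
    by (rule normal_closure_minimal[OF Ns])
  moreover have "R \<subseteq> normal_closure G (derived_set G (rigid_derived U))"
  proof (rule R_subset_normal)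
    have commutators: "derived_set G (rigid_derived U) \<subseteq> carrier G"
      by (rule derived_set_in_carrier[OF rigid_derived_subset_carrier])
    show "normal_closure G (derived_set G (rigid_derived U)) \<lhd> G"
      by (rule normal_closure_normal[OF commutators])
    show "normal_closure G (derived_set G (rigid_derived U)) \<noteq> {\<one>}"
      using rigid_derived_commutators_nontrivial subset_normal_closure[OF commutators] by blast
  qed
  ultimately show ?thesis using N_R by blast
qed

end

theorem proposition4p3:
  fixes G :: "('g, 'm) monoid_scheme" and X :: "'a topology"
    and \<phi> :: "'g \<Rightarrow> 'a \<Rightarrow> 'a" and U :: "'a set"
  assumes "group G"
    and "group_action G (topspace X) \<phi>"
    and "inj_on \<phi> (carrier G)"
    and "\<And>g. g \<in> carrier G \<Longrightarrow> homeomorphic_map X X (\<phi> g)"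
    and "Hausdorff_space X"
    and "infinite (topspace X)"
    and "openin X U"
    and "set_orbit \<phi> (R_sub G X \<phi> U) U = set_orbit \<phi> (carrier G) U"
    and "openin X = arbitrary union_of (\<lambda>V. V \<in> set_orbit \<phi> (carrier G) U)"
  shows "simple_grp (G\<lparr>carrier := R_sub G X \<phi> U\<rparr>) \<and>
         (\<forall>N. N \<lhd> G \<and> N \<noteq> {\<one>\<^bsub>G\<^esub>} \<longrightarrow> R_sub G X \<phi> U \<subseteq> N)"
proof -
  interpret R_translate_basis_action G X \<phi> U
    unfolding R_translate_basis_action_def R_translate_basis_action_axioms_def
      translate_basis_action_def translate_basis_action_axioms_def
      homeomorphism_action_def homeomorphism_action_axioms_def
      faithful_action_def faithful_action_axioms_def
    using assms by blast
  have "simple_grp (G\<lparr>carrier := R\<rparr>)"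
    unfolding simple_grp_def
    using subgroup_imp_group[OF R_subgroup] R_nontrivial normal_subgroup_of_R_eq by auto
  then show ?thesis using R_subset_normal by blast
qed

end
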